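(* (i) The function $\phi_{-1}^{-1}(t)=-\mathfrak{W}_0(-e^{-(t+1)})$, $t\in[0,\infty)$, is completely monotone on $[0,\infty)$. (ii) The function $\phi_{-2}^{-1}(t)=t+1-\sqrt{(t+1)^2-1}$, $t\in[0,\infty)$ (the inverse of $\phi_{-2}(x)=\tfrac12(x+x^{-1}-2)$ restricted to $x\in(0,1]$), is completely monotone on $[0,\infty)$.
   Context: $\phi_{-1}(x)=x-1-\log x$ and $\phi_{-2}(x)=\frac12(x^{-1}+x-2)$ for $x>0$; each is a strictly decreasing bijection from $(0,1]$ onto $[0,\infty)$, and $\phi_\lambda^{-1}$ denotes the inverse of this restriction. $\mathfrak{W}_0$ is the principal branch of the Lambert W function. A function $h$ on an interval $I$ is completely monotone on $I$ if it has derivatives of all orders on the interior of $I$ and $(-1)^k h^{(k)}(x)\ge0$ for all $k=0,1,2,\dots$ and all $x$ in the interior of $I$. *)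

theory Defs
  imports "HOL-Analysis.Analysis"
begin

definition phi_m1 :: "real \<Rightarrow> real" where
  "phi_m1 x = x - 1 - ln x"

definition phi_m2 :: "real \<Rightarrow> real" where
  "phi_m2 x = (inverse x + x - 2) / 2"

definition phi_inv :: "(real \<Rightarrow> real) \<Rightarrow> real \<Rightarrow> real" where
  "phi_inv \<phi> t = (THE x. x \<in> {0<..1} \<and> \<phi> x = t)"

definition lambertW0 :: "real \<Rightarrow> real" where
  "lambertW0 x = (THE w. w \<ge> -1 \<and> w * exp w = x)"

definition completely_monotone_on :: "real set \<Rightarrow> (real \<Rightarrow> real) \<Rightarrow> bool" where
  "completely_monotone_on I h \<longleftrightarrow>
     (\<exists>D :: nat \<Rightarrow> real \<Rightarrow> real.
        (\<forall>x\<in>interior I. D 0 x = h x) \<and>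
        (\<forall>k. \<forall>x\<in>interior I. (D k has_real_derivative D (Suc k) x) (at x)) \<and>
        (\<forall>k. \<forall>x\<in>interior I. (-1) ^ k * D k x \<ge> 0))"

end

theory Submission
  imports Defs "HOL-Computational_Algebra.Polynomial" "HOL-Complex_Analysis.Conformal_Mappings"
begin

(*
  Complete monotonicity is preserved by products (Leibniz rule) and by passing from a completely
  monotone g to a nonnegative h with h' = -g.  For phi_m1 the inverse function theorem gives
  W' = -V for W = phi_inv phi_m1 and V = W / (1 - W), and V solves the autonomous equation
  V' = -V (1 + V)^2.  If V >= 0 solves V' = -P(V) with P a polynomial with nonnegative coefficients,
  then (-1)^k V^(k) is again such a polynomial evaluated at V, so V and hence W are completely
  monotone.  For phi_m2 the inverse t + 1 - sqrt (t (t + 2)) is explicit; its second derivative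
  t^(-3/2) (t + 2)^(-3/2) is a product of completely monotone powers, and two integrations finish
  the proof.
*)

lemma completely_monotone_on_subset:
  assumes "completely_monotone_on I h" "interior J \<subseteq> interior I"
  shows "completely_monotone_on J h"
  using assms unfolding completely_monotone_on_def by blast

lemma completely_monotone_on_eq:
  assumes "completely_monotone_on I f" "\<And>x. x \<in> interior I \<Longrightarrow> f x = g x"
  shows "completely_monotone_on I g"
  using assms by (simp add: completely_monotone_on_def)

lemma completely_monotone_on_antiderivative:
  assumes g: "completely_monotone_on I g"
    and h': "\<And>x. x \<in> interior I \<Longrightarrow> (h has_real_derivative - g x) (at x)"
    and h_nonneg: "\<And>x. x \<in> interior I \<Longrightarrow> h x \<ge> 0"
  shows "completely_monotone_on I h"
proof -
  obtain D where D0: "\<forall>x\<in>interior I. D 0 x = g x"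
    and D': "\<forall>k. \<forall>x\<in>interior I. (D k has_real_derivative D (Suc k) x) (at x)"
    and D_sign: "\<forall>k. \<forall>x\<in>interior I. (-1) ^ k * D k x \<ge> 0"
    using g unfolding completely_monotone_on_def by blast
  define E where "E = case_nat h (\<lambda>k x. - D k x)"
  have "(E k has_real_derivative E (Suc k) x) (at x)" if "x \<in> interior I" for k x
    using that h' D0 D' by (cases k) (auto simp: E_def intro: derivative_intros)
  moreover have "(-1) ^ k * E k x \<ge> 0" if "x \<in> interior I" for k x
    using that h_nonneg D_sign by (cases k) (auto simp: E_def)
  ultimately show ?thesis
    unfolding completely_monotone_on_def by (intro exI[of _ E]) (auto simp: E_def)
qed

lemma Leibniz_sum_Suc:
  fixes a b :: "nat \<Rightarrow> 'a::comm_semiring_1"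
  shows "(\<Sum>j\<le>Suc k. of_nat (Suc k choose j) * a j * b (Suc k - j))
       = (\<Sum>j\<le>k. of_nat (k choose j) * (a (Suc j) * b (k - j) + a j * b (Suc (k - j))))"
proof -
  have pascal: "(\<Sum>j\<le>Suc k. of_nat (Suc k choose j) * a j * b (Suc k - j))
      = a 0 * b (Suc k) + (\<Sum>j\<le>k. of_nat (k choose j) * a (Suc j) * b (k - j))
        + (\<Sum>j\<le>k. of_nat (k choose Suc j) * a (Suc j) * b (k - j))"
    unfolding sum.atMost_Suc_shift by (simp add: sum.distrib algebra_simps)
  have "(\<Sum>j\<le>k. of_nat (k choose j) * a j * b (Suc (k - j)))
      = (\<Sum>j\<le>Suc k. of_nat (k choose j) * a j * b (Suc k - j))"
    by (simp add: Suc_diff_le binomial_eq_0)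
  also have "\<dots> = a 0 * b (Suc k) + (\<Sum>j\<le>k. of_nat (k choose Suc j) * a (Suc j) * b (k - j))"
    unfolding sum.atMost_Suc_shift by simp
  finally show ?thesis
    unfolding pascal by (simp add: sum.distrib algebra_simps)
qed

lemma completely_monotone_on_mult:
  assumes "completely_monotone_on I f" "completely_monotone_on I g"
  shows "completely_monotone_on I (\<lambda>x. f x * g x)"
proof -
  obtain F where F0: "\<forall>x\<in>interior I. F 0 x = f x"
    and F': "\<And>k x. x \<in> interior I \<Longrightarrow> (F k has_real_derivative F (Suc k) x) (at x)"
    and F_sign: "\<And>k x. x \<in> interior I \<Longrightarrow> (-1) ^ k * F k x \<ge> 0"
    using assms(1) unfolding completely_monotone_on_def by blast
  obtain G where G0: "\<forall>x\<in>interior I. G 0 x = g x"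
    and G': "\<And>k x. x \<in> interior I \<Longrightarrow> (G k has_real_derivative G (Suc k) x) (at x)"
    and G_sign: "\<And>k x. x \<in> interior I \<Longrightarrow> (-1) ^ k * G k x \<ge> 0"
    using assms(2) unfolding completely_monotone_on_def by blast
  define H where "H k x = (\<Sum>j\<le>k. of_nat (k choose j) * F j x * G (k - j) x)" for k x
  have "(H k has_real_derivative H (Suc k) x) (at x)" if "x \<in> interior I" for k x
  proof -
    have "(H k has_real_derivative
        (\<Sum>j\<le>k. of_nat (k choose j) *
          (F (Suc j) x * G (k - j) x + F j x * G (Suc (k - j)) x))) (at x)"
      unfolding H_def by (auto intro!: derivative_eq_intros F' G' that simp: algebra_simps)
    then show ?thesis
      using Leibniz_sum_Suc[of k "\<lambda>j. F j x" "\<lambda>j. G j x"] by (simp add: H_def)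
  qed
  moreover have "(-1) ^ k * H k x \<ge> 0" if "x \<in> interior I" for k x
  proof -
    have "(-1) ^ k * H k x
        = (\<Sum>j\<le>k. of_nat (k choose j) * ((-1) ^ j * F j x) * ((-1) ^ (k - j) * G (k - j) x))"
      unfolding H_def sum_distrib_left
      by (intro sum.cong refl) (simp add: algebra_simps flip: power_add)
    also have "\<dots> \<ge> 0"
      using F_sign[OF that] G_sign[OF that]
      by (intro sum_nonneg mult_nonneg_nonneg[OF mult_nonneg_nonneg[OF of_nat_0_le_iff]])
    finally show ?thesis .
  qed
  ultimately show ?thesis
    unfolding completely_monotone_on_def using F0 G0 by (intro exI[of _ H]) (auto simp: H_def)
qed

lemma completely_monotone_on_powr:
  assumes "a \<ge> 0"
  shows "completely_monotone_on {-c..} (\<lambda>t. (t + c) powr - a)"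
proof -
  define D where "D k t = (-1) ^ k * pochhammer a k * (t + c) powr (- a - real k)" for k t
  have "(D k has_real_derivative D (Suc k) t) (at t)" if "t > -c" for k t
    using that unfolding D_def
    by (auto intro!: derivative_eq_intros simp: pochhammer_Suc algebra_simps)
  moreover have "(-1) ^ k * D k t \<ge> 0" for k t
  proof -
    have "pochhammer a k \<ge> 0"
      using assms by (induction k) (simp_all add: pochhammer_Suc)
    then show ?thesis
      by (simp add: D_def flip: mult.assoc power_add)
  qed
  ultimately show ?thesis
    unfolding completely_monotone_on_def by (intro exI[of _ D]) (auto simp: D_def[of 0])
qed

lemma poly_nonneg_if_coeff_nonneg:
  fixes p :: "'a::linordered_idom poly"
  assumes "\<forall>n. coeff p n \<ge> 0" "x \<ge> 0"
  shows "poly p x \<ge> 0"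
  using assms(1)
proof (induction p)
  case (pCons a p)
  then have "a \<ge> 0" "\<forall>n. coeff p n \<ge> 0"
    by (metis coeff_pCons_0, metis coeff_pCons_Suc)
  with pCons.IH show ?case
    using assms(2) by simp
qed simp

lemma coeff_mult_nonneg:
  fixes p q :: "'a::linordered_idom poly"
  assumes "\<forall>n. coeff p n \<ge> 0" "\<forall>n. coeff q n \<ge> 0"
  shows "\<forall>n. coeff (p * q) n \<ge> 0"
  using assms by (auto simp: coeff_mult intro!: sum_nonneg)

lemma coeff_pderiv_nonneg:
  fixes p :: "'a::linordered_idom poly"
  assumes "\<forall>n. coeff p n \<ge> 0"
  shows "\<forall>n. coeff (pderiv p) n \<ge> 0"
  using assms by (auto simp: coeff_pderiv)

lemma completely_monotone_on_polynomial_ode: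
  fixes P :: "real poly"
  assumes P: "\<forall>n. coeff P n \<ge> 0"
    and V_nonneg: "\<And>x. x \<in> interior I \<Longrightarrow> V x \<ge> 0"
    and V': "\<And>x. x \<in> interior I \<Longrightarrow> (V has_real_derivative - poly P (V x)) (at x)"
  shows "completely_monotone_on I V"
proof -
  define R where "R k = ((\<lambda>q. pderiv q * P) ^^ k) [:0, 1:]" for k
  have R_0: "R 0 = [:0, 1:]" and R_Suc: "R (Suc k) = pderiv (R k) * P" for k
    by (simp_all add: R_def)
  have R_nonneg: "\<forall>n. coeff (R k) n \<ge> 0" for k
  proof (induction k)
    case 0
    show ?case by (simp add: R_0 coeff_pCons split: nat.split)
  next
    case (Suc k)
    then show ?case
      unfolding R_Suc by (intro coeff_mult_nonneg coeff_pderiv_nonneg P)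
  qed
  define D where "D = (\<lambda>k x. (-1) ^ k * poly (R k) (V x))"
  have "(D k has_real_derivative D (Suc k) x) (at x)" if "x \<in> interior I" for k x
  proof -
    have "((\<lambda>x. poly (R k) (V x)) has_real_derivative
        poly (pderiv (R k)) (V x) * - poly P (V x)) (at x)"
      by (rule DERIV_chain2[OF poly_DERIV V'[OF that]])
    from DERIV_cmult[OF this, of "(-1) ^ k"] show ?thesis
      by (simp add: D_def R_Suc)
  qed
  moreover have "(-1) ^ k * D k x \<ge> 0" if "x \<in> interior I" for k x
    using poly_nonneg_if_coeff_nonneg[OF R_nonneg V_nonneg[OF that]]
    by (simp add: D_def flip: mult.assoc power_add)
  ultimately show ?thesis
    unfolding completely_monotone_on_def by (intro exI[of _ D]) (auto simp: D_def R_0)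
qed

lemma inj_on_if_deriv_neg:
  fixes f f' :: "real \<Rightarrow> real"
  assumes f': "\<And>x. a < x \<Longrightarrow> x \<le> b \<Longrightarrow> (f has_real_derivative f' x) (at x)"
    and neg: "\<And>x. a < x \<Longrightarrow> x < b \<Longrightarrow> f' x < 0"
  shows "inj_on f {a<..b}"
proof (rule linorder_inj_onI')
  fix x y assume xy: "x \<in> {a<..b}" "y \<in> {a<..b}" "x < y"
  then have cont: "continuous_on {x..y} f"
    by (intro DERIV_continuous_on[of _ _ f'] has_field_derivative_at_within[OF f']) auto
  have "f x > f y"
  proof (rule DERIV_neg_imp_decreasing_open[OF \<open>x < y\<close> _ cont])
    fix z assume "x < z" "z < y"
    then show "\<exists>d. (f has_real_derivative d) (at z) \<and> d < 0"
      using xy by (intro exI[of _ "f' z"]) (auto intro: f' neg)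
  qed
  then show "f x \<noteq> f y" by simp
qed

lemma phi_inv_eqI:
  assumes "inj_on \<phi> {0<..1}" "x \<in> {0<..1}" "\<phi> x = t"
  shows "phi_inv \<phi> t = x"
  unfolding phi_inv_def by (rule the_equality) (use assms in \<open>auto dest: inj_onD\<close>)

lemma phi_m1_has_real_derivative: "x > 0 \<Longrightarrow> (phi_m1 has_real_derivative 1 - 1 / x) (at x)"
  unfolding phi_m1_def by (auto intro!: derivative_eq_intros)

lemma inj_on_phi_m1: "inj_on phi_m1 {0<..1}"
proof (rule inj_on_if_deriv_neg)
  show "(phi_m1 has_real_derivative 1 - 1 / x) (at x)" if "0 < x" "x \<le> 1" for x
    using that(1) by (rule phi_m1_has_real_derivative)
  show "1 - 1 / x < 0" if "0 < x" "x < 1" for x :: real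
    using that by (simp add: field_simps)
qed

lemma phi_m1_surj:
  assumes "t \<ge> 0"
  obtains x where "x \<in> {0<..1}" "phi_m1 x = t"
proof -
  let ?a = "exp (-(t + 1))"
  have "continuous_on {?a..1} phi_m1"
    unfolding phi_m1_def by (intro continuous_intros) (auto intro: less_le_trans[OF exp_gt_zero])
  moreover have "phi_m1 1 \<le> t" "t \<le> phi_m1 ?a" "?a \<le> 1"
    using assms by (auto simp: phi_m1_def)
  ultimately obtain x where "?a \<le> x" "x \<le> 1" "phi_m1 x = t"
    using IVT2'[of phi_m1 1 t ?a] by blast
  then show ?thesis
    by (intro that[of x]) (auto intro: less_le_trans[OF exp_gt_zero])
qed

lemma phi_inv_phi_m1:
  assumes "t \<ge> 0"
  shows "phi_inv phi_m1 t \<in> {0<..1}" "phi_m1 (phi_inv phi_m1 t) = t"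
proof -
  obtain x where x: "x \<in> {0<..1}" "phi_m1 x = t"
    using phi_m1_surj[OF assms] .
  then have "phi_inv phi_m1 t = x"
    by (rule phi_inv_eqI[OF inj_on_phi_m1])
  with x show "phi_inv phi_m1 t \<in> {0<..1}" "phi_m1 (phi_inv phi_m1 t) = t"
    by simp_all
qed

lemma phi_inv_phi_m1_less_1: "t > 0 \<Longrightarrow> phi_inv phi_m1 t < 1"
  using phi_inv_phi_m1[of t] by (cases "phi_inv phi_m1 t = 1") (auto simp: phi_m1_def)

lemma phi_inv_phi_m1_eq_lambertW0:
  assumes "t \<ge> 0"
  shows "phi_inv phi_m1 t = - lambertW0 (- exp (-(t + 1)))"
proof -
  have phi_m1_iff: "phi_m1 x = t \<longleftrightarrow> x * exp (-x) = exp (-(t + 1))" if "x > 0" for x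
  proof -
    have "x * exp (-x) = exp (ln x - x)"
      using that by (simp add: exp_diff exp_minus field_simps)
    then show ?thesis by (auto simp: phi_m1_def)
  qed
  define x where "x = phi_inv phi_m1 t"
  have x: "x \<in> {0<..1}" "phi_m1 x = t"
    using phi_inv_phi_m1[OF assms] by (auto simp: x_def)
  have "lambertW0 (- exp (-(t + 1))) = -x"
    unfolding lambertW0_def
  proof (rule the_equality)
    show "-x \<ge> -1 \<and> -x * exp (-x) = - exp (-(t + 1))"
      using x phi_m1_iff[of x] by auto
  next
    fix w assume w: "w \<ge> -1 \<and> w * exp w = - exp (-(t + 1))"
    then have "w * exp w < 0" by simp
    then have "w < 0" by (simp add: mult_less_0_iff)
    then have "phi_m1 (-w) = t" using phi_m1_iff[of "-w"] w by simp
    with x w \<open>w < 0\<close> show "w = -x"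
      using inj_onD[OF inj_on_phi_m1, of "-w" x] by auto
  qed
  then show ?thesis by (simp add: x_def)
qed

lemma phi_inv_phi_m1_has_real_derivative:
  assumes "t > 0"
  shows "(phi_inv phi_m1 has_real_derivative - (phi_inv phi_m1 t / (1 - phi_inv phi_m1 t))) (at t)"
proof -
  define x where "x = phi_inv phi_m1 t"
  have x: "0 < x" "x < 1" "phi_m1 x = t"
    using phi_inv_phi_m1[of t] phi_inv_phi_m1_less_1[of t] assms by (auto simp: x_def)
  have "(phi_inv phi_m1 has_real_derivative inverse (1 - 1 / x)) (at t)"
  proof (rule has_field_derivative_inverse_strong_x[where S = "{0<..<1}"])
    show "continuous_on {0<..<1} phi_m1"
      by (rule DERIV_continuous_on[OF has_field_derivative_at_within[OF phi_m1_has_real_derivative]])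
        simp
    show "phi_inv phi_m1 (phi_m1 z) = z" if "z \<in> {0<..<1}" for z
      using that by (intro phi_inv_eqI[OF inj_on_phi_m1]) auto
  qed (use x in \<open>auto simp: x_def phi_m1_has_real_derivative\<close>)
  moreover have "inverse (1 - 1 / x) = - (x / (1 - x))"
    using x by (simp add: field_simps)
  ultimately show ?thesis by (simp add: x_def)
qed

lemma completely_monotone_phi_inv_phi_m1: "completely_monotone_on {0..} (phi_inv phi_m1)"
proof -
  define W where "W = phi_inv phi_m1"
  define V where "V = (\<lambda>t. W t / (1 - W t))"
  have W: "0 < W t" "W t < 1" if "t > 0" for t
    using phi_inv_phi_m1[of t] phi_inv_phi_m1_less_1[of t] that by (auto simp: W_def)
  have V_pos: "V t > 0" if "t > 0" for t
    using W[OF that] by (simp add: V_def)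
  have W': "(W has_real_derivative - V t) (at t)" if "t > 0" for t
    using phi_inv_phi_m1_has_real_derivative[OF that] by (simp add: W_def V_def)
  \<comment> \<open>Since 1 + V = 1 / (1 - W), the quotient rule gives V' = W' / (1 - W)^2 = -V (1 + V)^2.\<close>
  have V': "(V has_real_derivative - poly [:0, 1, 2, 1:] (V t)) (at t)" if "t > 0" for t
  proof -
    have num: "- V t * (1 - W t) - W t * (0 - - V t) = - V t"
      by (simp add: algebra_simps)
    have inv: "inverse (1 - W t) = 1 + V t"
      using W[OF that] by (simp add: V_def field_simps)
    have "(- V t * (1 - W t) - W t * (0 - - V t)) / ((1 - W t) * (1 - W t))
        = - poly [:0, 1, 2, 1:] (V t)"
      unfolding num divide_inverse inverse_mult_distrib inv by (simp add: algebra_simps)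
    moreover have "(V has_real_derivative
        (- V t * (1 - W t) - W t * (0 - - V t)) / ((1 - W t) * (1 - W t))) (at t)"
      using W[OF that] unfolding V_def
      by (intro DERIV_divide W'[OF that, unfolded V_def] DERIV_diff DERIV_const) simp
    ultimately show ?thesis by simp
  qed
  have P: "\<forall>n. coeff [:0, 1, 2, 1:] n \<ge> (0::real)"
    by (simp add: coeff_pCons split: nat.split)
  have "completely_monotone_on {0..} V"
    using P by (rule completely_monotone_on_polynomial_ode)
      (use V_pos V' in \<open>auto intro: less_imp_le\<close>)
  then have "completely_monotone_on {0..} W"
    by (rule completely_monotone_on_antiderivative) (use W W' in \<open>auto simp: less_imp_le\<close>)
  then show ?thesis by (simp add: W_def)
qed

lemma phi_m2_has_real_derivative: "x > 0 \<Longrightarrow> (phi_m2 has_real_derivative (1 - 1 / x^2) / 2) (at x)"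
  unfolding phi_m2_def by (auto intro!: derivative_eq_intros simp: field_simps power2_eq_square)

lemma inj_on_phi_m2: "inj_on phi_m2 {0<..1}"
proof (rule inj_on_if_deriv_neg)
  show "(phi_m2 has_real_derivative (1 - 1 / x^2) / 2) (at x)" if "0 < x" "x \<le> 1" for x
    using that(1) by (rule phi_m2_has_real_derivative)
  show "(1 - 1 / x^2) / 2 < 0" if "0 < x" "x < 1" for x :: real
    using that by (simp add: field_simps power_less_one_iff)
qed

lemma phi_inv_phi_m2:
  assumes "t \<ge> 0"
  shows "phi_inv phi_m2 t = t + 1 - sqrt ((t + 1)^2 - 1)"
proof -
  define r where "r = sqrt ((t + 1)^2 - 1)"
  have "(t + 1)^2 - 1 \<ge> 0"
    using assms by (simp add: power2_eq_square algebra_simps)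
  then have r: "r \<ge> 0" "r^2 = (t + 1)^2 - 1"
    unfolding r_def by simp_all
  have "r < t + 1"
    by (rule power_less_imp_less_base[of _ 2]) (use r assms in auto)
  moreover have "t \<le> r"
    by (rule power2_le_imp_le) (use r assms in \<open>auto simp: power2_eq_square algebra_simps\<close>)
  moreover have "inverse (t + 1 - r) = t + 1 + r"
    using r by (intro inverse_unique) (simp add: algebra_simps power2_eq_square)
  ultimately have "phi_inv phi_m2 t = t + 1 - r"
    using assms by (intro phi_inv_eqI[OF inj_on_phi_m2]) (auto simp: phi_m2_def)
  then show ?thesis by (simp add: r_def)
qed

lemma sqrt_mult_plus_2_has_real_derivative:
  fixes t :: real
  assumes "t > 0"
  shows "((\<lambda>t. sqrt (t * (t + 2))) has_real_derivative (t + 1) / sqrt (t * (t + 2))) (at t)"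
proof -
  have q: "t * (t + 2) > 0" using assms by simp
  have "((\<lambda>t. sqrt (t * (t + 2))) has_real_derivative
      inverse (sqrt (t * (t + 2))) / 2 * (2 * t + 2)) (at t)"
    by (rule DERIV_chain2[where g = "\<lambda>t. t * (t + 2)", OF DERIV_real_sqrt[OF q]])
      (auto intro!: derivative_eq_intros)
  then show ?thesis
    by (rule DERIV_cong) (use q in \<open>simp add: field_simps\<close>)
qed

lemma completely_monotone_inverse_cube_sqrt_mult_plus_2:
  "completely_monotone_on {0..} (\<lambda>t. 1 / sqrt (t * (t + 2)) ^ 3)"
proof -
  have "completely_monotone_on {0..} (\<lambda>t. (t + 0) powr -(3/2) * (t + 2) powr -(3/2))"
    by (intro completely_monotone_on_mult completely_monotone_on_subset[OF completely_monotone_on_powr])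
      auto
  then show ?thesis
  proof (rule completely_monotone_on_eq)
    fix t :: real assume "t \<in> interior {0..}"
    then have "t > 0" by simp
    have "(t + 0) powr -(3/2) * (t + 2) powr -(3/2) = 1 / (t * (t + 2)) powr (3/2)"
      using \<open>t > 0\<close> by (simp add: powr_mult powr_minus_divide)
    also have "(t * (t + 2)) powr (3/2) = sqrt (t * (t + 2)) ^ 3"
      using \<open>t > 0\<close> by (simp add: powr_half_sqrt[symmetric] powr_power)
    finally show "(t + 0) powr -(3/2) * (t + 2) powr -(3/2) = 1 / sqrt (t * (t + 2)) ^ 3" .
  qed
qed

lemma completely_monotone_phi_inv_phi_m2: "completely_monotone_on {0..} (phi_inv phi_m2)"
proof -
  define s where "s t = sqrt (t * (t + 2))" for t
  have s_pos: "s t > 0" and s_sq: "(s t)^2 = t * (t + 2)" if "t > 0" for t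
    using that by (simp_all add: s_def)
  have s_less: "s t < t + 1" if "t > 0" for t
  proof (rule power_less_imp_less_base[of _ 2])
    show "(s t)^2 < (t + 1)^2"
      unfolding s_sq[OF that] by (simp add: power2_eq_square algebra_simps)
  qed (use that in simp)
  have s': "(s has_real_derivative (t + 1) / s t) (at t)" if "t > 0" for t
    using sqrt_mult_plus_2_has_real_derivative[OF that] by (simp add: s_def[abs_def])
  have g': "((\<lambda>t. (t + 1) / s t - 1) has_real_derivative - (1 / s t ^ 3)) (at t)" if "t > 0" for t
  proof -
    have "((\<lambda>t. (t + 1) / s t - 1) has_real_derivative
        (s t - (t + 1) * ((t + 1) / s t)) / (s t * s t)) (at t)"
      using s_pos[OF that] by (auto intro!: derivative_eq_intros s'[OF that])
    also have "(s t - (t + 1) * ((t + 1) / s t)) / (s t * s t) = ((s t)^2 - (t + 1)^2) / s t ^ 3"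
      using s_pos[OF that] by (simp add: field_simps power2_eq_square power3_eq_cube)
    also have "(s t)^2 - (t + 1)^2 = -1"
      unfolding s_sq[OF that] by (simp add: power2_eq_square algebra_simps)
    finally show ?thesis by simp
  qed
  have "completely_monotone_on {0..} (\<lambda>t. (t + 1) / s t - 1)"
    using completely_monotone_inverse_cube_sqrt_mult_plus_2 unfolding s_def[symmetric]
    by (rule completely_monotone_on_antiderivative)
      (use g' s_pos s_less in \<open>auto simp: field_simps intro!: less_imp_le\<close>)
  then have "completely_monotone_on {0..} (\<lambda>t. t + 1 - s t)"
    by (rule completely_monotone_on_antiderivative)
      (use s' s_less in \<open>auto intro!: derivative_eq_intros simp: less_imp_le\<close>)
  then show ?thesis
    by (rule completely_monotone_on_eq)
      (simp add: phi_inv_phi_m2 s_def power2_eq_square algebra_simps)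
qed

theorem lemma4:
  shows "(\<forall>t\<ge>0. phi_inv phi_m1 t = - lambertW0 (- exp (-(t + 1))))
       \<and> completely_monotone_on {0..} (phi_inv phi_m1)
       \<and> (\<forall>t\<ge>0. phi_inv phi_m2 t = t + 1 - sqrt ((t + 1)^2 - 1))
       \<and> completely_monotone_on {0..} (phi_inv phi_m2)"
  using phi_inv_phi_m1_eq_lambertW0 completely_monotone_phi_inv_phi_m1
    phi_inv_phi_m2 completely_monotone_phi_inv_phi_m2 by blast

end
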